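(* Every $\operatorname{B}$-set $B\subset\mathbb{R}^2$ has positive reach.
   Context: A set has positive reach if there is $\varepsilon>0$ such that every point at distance less than $\varepsilon$ from it has a unique nearest point in it. A function $f$ on an open interval is semiconcave if $f(x)-\frac c2x^2$ is concave for some $c\geq0$, and semiconvex if $-f$ is semiconcave. $M\subset\mathbb{R}^2$ is a $\operatorname{B}_-$-set if there are $r>0$ and Lipschitz functions $\psi\leq0\leq\varphi$ on $[0,r]$ with $\varphi$ semiconcave on $(0,r)$, $\psi$ semiconvex on $(0,r)$, $\varphi(0)=\psi(0)=0$, $\varphi'_+(0)=\psi'_+(0)=0$ and $M=\{(x,y):x\in[0,r],\ \psi(x)\leq y\leq\varphi(x)\}$; a $\operatorname{B}_+$-set is defined the same way with $[-r,r]$, $(-r,r)$ and $\varphi'(0)=\psi'(0)=0$; a $\operatorname{B}$-set is a $\operatorname{B}_-$-set or a $\operatorname{B}_+$-set. *)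

theory Defs
  imports "HOL-Analysis.Analysis"
begin

text \<open>The plane R^2 is modelled as real \<times> real (Euclidean distance).\<close>

definition positive_reach :: "(real \<times> real) set \<Rightarrow> bool" where
  "positive_reach M \<longleftrightarrow>
     (\<exists>\<epsilon>>0. \<forall>p. infdist p M < \<epsilon> \<longrightarrow> (\<exists>!q. q \<in> M \<and> dist p q = infdist p M))"

definition semiconcave_on :: "real set \<Rightarrow> (real \<Rightarrow> real) \<Rightarrow> bool" where
  "semiconcave_on I f \<longleftrightarrow> (\<exists>c\<ge>0. concave_on I (\<lambda>x. f x - c / 2 * x\<^sup>2))"

definition semiconvex_on :: "real set \<Rightarrow> (real \<Rightarrow> real) \<Rightarrow> bool" where
  "semiconvex_on I f \<longleftrightarrow> semiconcave_on I (\<lambda>x. - f x)"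

definition B_minus_set :: "(real \<times> real) set \<Rightarrow> bool" where
  "B_minus_set M \<longleftrightarrow>
     (\<exists>r>0. \<exists>\<phi> \<psi> :: real \<Rightarrow> real.
        (\<forall>x\<in>{0..r}. \<psi> x \<le> 0 \<and> 0 \<le> \<phi> x) \<and>
        (\<exists>L. L-lipschitz_on {0..r} \<phi>) \<and> (\<exists>L. L-lipschitz_on {0..r} \<psi>) \<and>
        semiconcave_on {0<..<r} \<phi> \<and> semiconvex_on {0<..<r} \<psi> \<and>
        \<phi> 0 = 0 \<and> \<psi> 0 = 0 \<and>
        (\<phi> has_real_derivative 0) (at_right 0) \<and>
        (\<psi> has_real_derivative 0) (at_right 0) \<and>
        M = {(x, y). x \<in> {0..r} \<and> \<psi> x \<le> y \<and> y \<le> \<phi> x})"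

definition B_plus_set :: "(real \<times> real) set \<Rightarrow> bool" where
  "B_plus_set M \<longleftrightarrow>
     (\<exists>r>0. \<exists>\<phi> \<psi> :: real \<Rightarrow> real.
        (\<forall>x\<in>{-r..r}. \<psi> x \<le> 0 \<and> 0 \<le> \<phi> x) \<and>
        (\<exists>L. L-lipschitz_on {-r..r} \<phi>) \<and> (\<exists>L. L-lipschitz_on {-r..r} \<psi>) \<and>
        semiconcave_on {-r<..<r} \<phi> \<and> semiconvex_on {-r<..<r} \<psi> \<and>
        \<phi> 0 = 0 \<and> \<psi> 0 = 0 \<and>
        (\<phi> has_real_derivative 0) (at 0) \<and>
        (\<psi> has_real_derivative 0) (at 0) \<and>
        M = {(x, y). x \<in> {-r..r} \<and> \<psi> x \<le> y \<and> y \<le> \<phi> x})"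

definition B_set :: "(real \<times> real) set \<Rightarrow> bool" where
  "B_set M \<longleftrightarrow> B_minus_set M \<or> B_plus_set M"

end

theory Submission
  imports Defs
begin

text \<open>Call M quasi-midpoint-convex with constant \<kappa> if the midpoint of any two points a, b of M
lies within \<kappa> |a - b|^2 of M. Then a point p at distance d < 1/(8\<kappa>) from M has at most one
nearest point: if a \<noteq> b were both nearest, the parallelogram law puts their midpoint at distance
sqrt(d^2 - |a - b|^2/4) from p, which falls short of d by more than \<kappa> |a - b|^2, so the point of
M near the midpoint would be closer than d.

The region between a semiconcave graph \<phi> (constant c) and a semiconvex graph \<psi> is
quasi-midpoint-convex, since \<phi>((a + b)/2) \<ge> (\<phi> a + \<phi> b)/2 - c (a - b)^2/8 and dually for \<psi>:
clamping the midpoint vertically into the region moves it by at most that much.\<close>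

definition quasi_midpoint_convex :: "real \<Rightarrow> 'a::real_normed_vector set \<Rightarrow> bool" where
  "quasi_midpoint_convex \<kappa> M \<longleftrightarrow>
     (\<forall>a\<in>M. \<forall>b\<in>M. \<exists>z\<in>M. dist (midpoint a b) z \<le> \<kappa> * (dist a b)\<^sup>2)"

lemma dist_midpoint_squared:
  fixes p a b :: "'a::real_inner"
  shows "(dist p (midpoint a b))\<^sup>2 = ((dist p a)\<^sup>2 + (dist p b)\<^sup>2) / 2 - (dist a b)\<^sup>2 / 4"
  unfolding dist_norm midpoint_def power2_norm_eq_inner
  by (simp add: inner_simps inner_commute field_simps)

lemma dist_lt_near_midpoint:
  fixes p a b z :: "'a::real_inner"
  assumes "dist p a = d" "dist p b = d" "a \<noteq> b" "\<kappa> \<ge> 0" "8 * \<kappa> * d < 1"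
    and near: "dist (midpoint a b) z \<le> \<kappa> * (dist a b)\<^sup>2"
  shows "dist p z < d"
proof -
  define D where "D = (dist a b)\<^sup>2"
  have "D > 0"
    using \<open>a \<noteq> b\<close> by (simp add: D_def)
  have "d > 0"
    using assms(1-3) by (metis dist_commute dist_eq_0_iff zero_le_dist order_le_less)
  have "dist a b \<le> 2 * d"
    using dist_triangle3[of a b p] assms(1,2) by simp
  then have "\<kappa> * D \<le> \<kappa> * (2 * d)\<^sup>2"
    unfolding D_def using \<open>\<kappa> \<ge> 0\<close> by (intro mult_left_mono power_mono) simp_all
  also have "\<dots> = (4 * \<kappa> * d) * d"
    by (simp add: power2_eq_square)
  also have "\<dots> < d"
    using \<open>d > 0\<close> \<open>8 * \<kappa> * d < 1\<close> \<open>\<kappa> \<ge> 0\<close> by (simp add: mult_less_cancel_right1)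
  finally have slack: "0 < d - \<kappa> * D" by simp
  have "2 * \<kappa> * d * D < D / 4"
    using \<open>D > 0\<close> \<open>8 * \<kappa> * d < 1\<close> by (simp add: mult_less_cancel_right1)
  have "(dist p (midpoint a b))\<^sup>2 = d\<^sup>2 - D / 4"
    using dist_midpoint_squared[of p a b] assms(1,2) by (simp add: D_def)
  also have "\<dots> < d\<^sup>2 - 2 * \<kappa> * d * D + (\<kappa> * D)\<^sup>2"
    using \<open>2 * \<kappa> * d * D < D / 4\<close> zero_le_power2[of "\<kappa> * D"] by linarith
  also have "\<dots> = (d - \<kappa> * D)\<^sup>2"
    by (simp add: power2_diff algebra_simps)
  finally have "dist p (midpoint a b) < d - \<kappa> * D"
    using slack by (meson power_less_imp_less_base less_imp_le)
  moreover have "dist p z \<le> dist p (midpoint a b) + \<kappa> * D"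
    using dist_triangle[of p z "midpoint a b"] near by (simp add: D_def dist_commute)
  ultimately show ?thesis by simp
qed

lemma quasi_midpoint_convex_nearest_point_unique:
  fixes M :: "'a::real_inner set"
  assumes "quasi_midpoint_convex \<kappa> M" "\<kappa> \<ge> 0" "8 * \<kappa> * infdist p M < 1"
    and "a \<in> M" "dist p a = infdist p M" and "b \<in> M" "dist p b = infdist p M"
  shows "a = b"
proof (rule ccontr)
  assume "a \<noteq> b"
  obtain z where "z \<in> M" "dist (midpoint a b) z \<le> \<kappa> * (dist a b)\<^sup>2"
    using assms(1,4,6) unfolding quasi_midpoint_convex_def by blast
  then have "dist p z < infdist p M"
    using dist_lt_near_midpoint[of p a _ b] \<open>a \<noteq> b\<close> assms(2,3,5,7) by blast
  with infdist_le[OF \<open>z \<in> M\<close>, of p] show False by simp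
qed

lemma positive_reach_if_quasi_midpoint_convex:
  fixes M :: "(real \<times> real) set"
  assumes "quasi_midpoint_convex \<kappa> M" "\<kappa> \<ge> 0" "closed M" "M \<noteq> {}"
  shows "positive_reach M"
  unfolding positive_reach_def
proof (intro exI[of _ "1 / (8 * \<kappa> + 1)"] conjI allI impI)
  show "1 / (8 * \<kappa> + 1) > 0"
    using \<open>\<kappa> \<ge> 0\<close> by simp
  fix p assume "infdist p M < 1 / (8 * \<kappa> + 1)"
  then have "(8 * \<kappa> + 1) * infdist p M < 1"
    using \<open>\<kappa> \<ge> 0\<close> by (simp add: field_simps)
  then have "8 * \<kappa> * infdist p M < 1"
    using infdist_nonneg[of p M] by (simp add: algebra_simps)
  moreover obtain q where "q \<in> M" "infdist p M = dist p q"
    using infdist_attains_inf[OF \<open>closed M\<close> \<open>M \<noteq> {}\<close>] by blast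
  ultimately show "\<exists>!q. q \<in> M \<and> dist p q = infdist p M"
    using quasi_midpoint_convex_nearest_point_unique[OF assms(1,2)] by metis
qed

lemma concave_on_open_interval_midpoint_lt:
  fixes g :: "real \<Rightarrow> real"
  assumes conc: "concave_on {lo<..<hi} g" and cont: "continuous_on {lo..hi} g"
    and "a \<in> {lo..hi}" "b \<in> {lo..hi}" "a < b"
  shows "(g a + g b) / 2 \<le> g ((a + b) / 2)"
proof -
  define h where "h = (b - a) / 2"
  define f where "f t = (g (a + t) + g (b - t)) / 2" for t
  have "continuous_on {0..h} f"
    unfolding f_def using assms(3,4)
    by (intro continuous_intros continuous_on_compose2[OF cont]) (auto simp: h_def field_simps)
  moreover have "0 < h"
    using \<open>a < b\<close> by (simp add: h_def)
  ultimately have lim: "(f \<longlongrightarrow> f 0) (at_right 0)"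
    by (metis continuous_on_def at_within_Icc_at_right atLeastAtMost_iff order_refl less_imp_le)
  have "f t \<le> g ((a + b) / 2)" if "t \<in> {0<..<h}" for t
  proof -
    have "a + t \<in> {lo<..<hi}" "b - t \<in> {lo<..<hi}"
      using that assms(3,4) by (auto simp: h_def)
    from concave_onD[OF conc, of "1/2", OF _ _ this] show ?thesis
      by (simp add: f_def field_simps)
  qed
  then have "eventually (\<lambda>t. f t \<le> g ((a + b) / 2)) (at_right 0)"
    using eventually_at_right_real[OF \<open>0 < h\<close>] by (auto elim: eventually_mono)
  from tendsto_upperbound[OF lim this] show ?thesis
    by (simp add: f_def)
qed

lemma concave_on_open_interval_midpoint:
  fixes g :: "real \<Rightarrow> real"
  assumes "concave_on {lo<..<hi} g" "continuous_on {lo..hi} g" "a \<in> {lo..hi}" "b \<in> {lo..hi}"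
  shows "(g a + g b) / 2 \<le> g ((a + b) / 2)"
  using concave_on_open_interval_midpoint_lt[OF assms(1-4)] concave_on_open_interval_midpoint_lt[OF assms(1,2,4,3)]
  by (cases a b rule: linorder_cases) (simp_all add: add.commute)

lemma semiconcave_midpoint:
  fixes f :: "real \<Rightarrow> real"
  assumes "concave_on {lo<..<hi} (\<lambda>x. f x - c / 2 * x\<^sup>2)" "continuous_on {lo..hi} f"
    and "a \<in> {lo..hi}" "b \<in> {lo..hi}"
  shows "(f a + f b) / 2 - c / 8 * (a - b)\<^sup>2 \<le> f ((a + b) / 2)"
proof -
  have "continuous_on {lo..hi} (\<lambda>x. f x - c / 2 * x\<^sup>2)"
    by (intro continuous_intros assms(2))
  from concave_on_open_interval_midpoint[OF assms(1) this assms(3,4)] show ?thesis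
    by (simp add: power2_eq_square field_simps)
qed

definition region_between :: "real \<Rightarrow> real \<Rightarrow> (real \<Rightarrow> real) \<Rightarrow> (real \<Rightarrow> real) \<Rightarrow> (real \<times> real) set" where
  "region_between lo hi \<psi> \<phi> = {(x, y). x \<in> {lo..hi} \<and> \<psi> x \<le> y \<and> y \<le> \<phi> x}"

lemma closed_region_between:
  assumes "continuous_on {lo..hi} \<phi>" "continuous_on {lo..hi} \<psi>"
  shows "closed (region_between lo hi \<psi> \<phi>)"
proof -
  define g where "g z = (snd z - \<psi> (fst z), \<phi> (fst z) - snd z)" for z :: "real \<times> real"
  have "region_between lo hi \<psi> \<phi> = ({lo..hi} \<times> UNIV) \<inter> g -` ({0..} \<times> {0..})"
    by (auto simp: region_between_def g_def)
  moreover have "continuous_on ({lo..hi} \<times> UNIV) g"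
    unfolding g_def
    by (intro continuous_intros continuous_on_compose2[OF assms(1)] continuous_on_compose2[OF assms(2)]) auto
  ultimately show ?thesis
    by (metis continuous_closed_preimage closed_Times closed_atLeast closed_UNIV closed_atLeastAtMost)
qed

lemma region_between_quasi_midpoint_convex:
  assumes "continuous_on {lo..hi} \<phi>" "continuous_on {lo..hi} \<psi>" "\<forall>x\<in>{lo..hi}. \<psi> x \<le> \<phi> x"
    and "semiconcave_on {lo<..<hi} \<phi>" "semiconvex_on {lo<..<hi} \<psi>"
  shows "\<exists>\<kappa>\<ge>0. quasi_midpoint_convex \<kappa> (region_between lo hi \<psi> \<phi>)"
proof -
  obtain c1 where "c1 \<ge> 0" and c1: "concave_on {lo<..<hi} (\<lambda>x. \<phi> x - c1 / 2 * x\<^sup>2)"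
    using assms(4) unfolding semiconcave_on_def by blast
  obtain c2 where "c2 \<ge> 0" and c2: "concave_on {lo<..<hi} (\<lambda>x. - \<psi> x - c2 / 2 * x\<^sup>2)"
    using assms(5) unfolding semiconvex_on_def semiconcave_on_def by blast
  define \<kappa> where "\<kappa> = max c1 c2 / 8"
  have "\<kappa> \<ge> 0"
    using \<open>c1 \<ge> 0\<close> by (simp add: \<kappa>_def)
  have "\<exists>z\<in>region_between lo hi \<psi> \<phi>. dist (midpoint p q) z \<le> \<kappa> * (dist p q)\<^sup>2"
    if p: "p \<in> region_between lo hi \<psi> \<phi>" and q: "q \<in> region_between lo hi \<psi> \<phi>" for p q
  proof -
    obtain a1 b1 a2 b2 where pq: "p = (a1, b1)" "q = (a2, b2)"
      and a: "a1 \<in> {lo..hi}" "a2 \<in> {lo..hi}"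
      and b: "\<psi> a1 \<le> b1" "b1 \<le> \<phi> a1" "\<psi> a2 \<le> b2" "b2 \<le> \<phi> a2"
      using p q unfolding region_between_def by auto
    define x y where "x = (a1 + a2) / 2" and "y = (b1 + b2) / 2"
    define \<delta> where "\<delta> = \<kappa> * (a1 - a2)\<^sup>2"
    have "0 \<le> \<delta>"
      using \<open>\<kappa> \<ge> 0\<close> by (simp add: \<delta>_def)
    have "midpoint p q = (x, y)"
      by (simp add: pq x_def y_def midpoint_def field_simps)
    have "x \<in> {lo..hi}"
      using a by (auto simp: x_def)
    have "c1 / 8 * (a1 - a2)\<^sup>2 \<le> \<delta>" "c2 / 8 * (a1 - a2)\<^sup>2 \<le> \<delta>"
      by (auto simp: \<delta>_def \<kappa>_def intro!: mult_right_mono)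
    moreover have "(\<phi> a1 + \<phi> a2) / 2 - c1 / 8 * (a1 - a2)\<^sup>2 \<le> \<phi> x"
      using semiconcave_midpoint[OF c1 assms(1) a] by (simp add: x_def)
    moreover have "(- \<psi> a1 + - \<psi> a2) / 2 - c2 / 8 * (a1 - a2)\<^sup>2 \<le> - \<psi> x"
      using semiconcave_midpoint[OF c2 _ a] assms(2) by (simp add: x_def continuous_on_minus)
    ultimately have "y - \<delta> \<le> \<phi> x \<and> \<psi> x \<le> y + \<delta>"
      unfolding y_def using b by argo
    have "\<bar>a1 - a2\<bar>\<^sup>2 \<le> (dist p q)\<^sup>2"
      using dist_fst_le[of p q] by (intro power_mono) (simp_all add: pq dist_real_def)
    then have "\<delta> \<le> \<kappa> * (dist p q)\<^sup>2"
      unfolding \<delta>_def power2_abs using \<open>\<kappa> \<ge> 0\<close> by (rule mult_left_mono)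
    define z where "z = (x, max (\<psi> x) (min y (\<phi> x)))"
    have "z \<in> region_between lo hi \<psi> \<phi>"
      using \<open>x \<in> {lo..hi}\<close> assms(3) by (auto simp: z_def region_between_def)
    moreover have "dist (midpoint p q) z \<le> \<delta>"
      using \<open>y - \<delta> \<le> \<phi> x \<and> \<psi> x \<le> y + \<delta>\<close> \<open>midpoint p q = (x, y)\<close> \<open>0 \<le> \<delta>\<close>
      by (auto simp: z_def dist_Pair_Pair dist_real_def)
    ultimately show ?thesis
      using \<open>\<delta> \<le> \<kappa> * (dist p q)\<^sup>2\<close> by force
  qed
  with \<open>\<kappa> \<ge> 0\<close> show ?thesis
    unfolding quasi_midpoint_convex_def by blast
qed

lemma positive_reach_region_between:
  assumes "lo \<le> hi" "continuous_on {lo..hi} \<phi>" "continuous_on {lo..hi} \<psi>"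
    and "\<forall>x\<in>{lo..hi}. \<psi> x \<le> \<phi> x"
    and "semiconcave_on {lo<..<hi} \<phi>" "semiconvex_on {lo<..<hi} \<psi>"
  shows "positive_reach (region_between lo hi \<psi> \<phi>)"
proof -
  obtain \<kappa> where "\<kappa> \<ge> 0" "quasi_midpoint_convex \<kappa> (region_between lo hi \<psi> \<phi>)"
    using region_between_quasi_midpoint_convex[OF assms(2-6)] by blast
  moreover have "(lo, \<psi> lo) \<in> region_between lo hi \<psi> \<phi>"
    using assms(1,4) by (auto simp: region_between_def)
  ultimately show ?thesis
    using positive_reach_if_quasi_midpoint_convex closed_region_between[OF assms(2,3)] by blast
qed

theorem lemma2p22:
  fixes B :: "(real \<times> real) set"
  assumes "B_set B"
  shows "positive_reach B"
proof -
  consider "B_minus_set B" | "B_plus_set B"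
    using assms unfolding B_set_def by blast
  then show ?thesis
  proof cases
    case 1
    then obtain r \<phi> \<psi> L1 L2 where "r > 0" "\<forall>x\<in>{0..r}. \<psi> x \<le> 0 \<and> 0 \<le> \<phi> x"
      and "L1-lipschitz_on {0..r} \<phi>" "L2-lipschitz_on {0..r} \<psi>"
      and "semiconcave_on {0<..<r} \<phi>" "semiconvex_on {0<..<r} \<psi>"
      and "B = region_between 0 r \<psi> \<phi>"
      unfolding B_minus_set_def region_between_def by auto
    then show ?thesis
      by (auto intro!: positive_reach_region_between dest: lipschitz_on_continuous_on)
  next
    case 2
    then obtain r \<phi> \<psi> L1 L2 where "r > 0" "\<forall>x\<in>{-r..r}. \<psi> x \<le> 0 \<and> 0 \<le> \<phi> x"
      and "L1-lipschitz_on {-r..r} \<phi>" "L2-lipschitz_on {-r..r} \<psi>"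
      and "semiconcave_on {-r<..<r} \<phi>" "semiconvex_on {-r<..<r} \<psi>"
      and "B = region_between (-r) r \<psi> \<phi>"
      unfolding B_plus_set_def region_between_def by auto
    then show ?thesis
      by (auto intro!: positive_reach_region_between dest: lipschitz_on_continuous_on)
  qed
qed

end
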